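(* Let $(K,\mathbb D)$ be an $F[m]$-field for the group law $F$ of the context. Let $0\le n\le m-1$ and $i,j<p^{n+1}$ with $(i,j)\neq(0,0)$. Then $F_n\subseteq\ker D_{(i,j)}$.
   Context: $k$ is a perfect field of characteristic $p>0$, $m\in\mathbb N_{>0}$. For $1\le i\le p-1$ let $\lambda_i\in\mathbb F_p$ be the image of $\frac1p\binom pi$, and $H_n(X_2,Y_2):=\sum_{i=1}^{p-1}\lambda_iX_2^{ip^n}Y_2^{(p-i)p^n}$. Fix $M\in\mathbb N$, $\alpha_0,\dots,\alpha_M\in k$, and let $F(X_1,X_2,Y_1,Y_2):=\big(X_1+Y_1+\sum_{n=0}^M\alpha_nH_n(X_2,Y_2),\ X_2+Y_2\big)$. Let $v_1,v_2,w_1,w_2$ be $m$-truncated variables ($k[\bar v,\bar w]=k[X_1,X_2,Y_1,Y_2]/(X_i^{p^m},Y_i^{p^m})$), $F[m]$ the image of $F$. An $F[m]$-field is a field $K\supseteq k$ with a family $(D_{(i,j)}:K\to K)_{0\le i,j<p^m}$, $D_{(0,0)}=\mathrm{id}$, such that $r\mapsto\sum D_{(i,j)}(r)v_1^iv_2^j$ is a $k$-algebra homomorphism $K\to K[v_1,v_2]$ and $\sum D_{(j_1,j_2)}(D_{(i_1,i_2)}(r))v_1^{i_1}v_2^{i_2}w_1^{j_1}w_2^{j_2}=\sum D_{(i_1,i_2)}(r)F[m]_1^{i_1}F[m]_2^{i_2}$ for all $r$. For $0\le s\le m-1$, $F_s:=\bigcap_{j=0}^s\big(\ker D_{(p^j,0)}\cap\ker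 D_{(0,p^j)}\big)$. *)

theory Defs
  imports Main "HOL-Computational_Algebra.Primes"
begin

text \<open>Elements of the m-truncated polynomial ring K[v1,v2,w1,w2] = K[X1,X2,Y1,Y2]/(X_i^q, Y_i^q),
  q = p^m, represented by their coefficient functions on exponent tuples (a1,a2,b1,b2)
  (exponents of v1, v2, w1, w2); coefficients with some exponent \<ge> q are 0.\<close>

type_synonym 'a tpoly = "nat \<times> nat \<times> nat \<times> nat \<Rightarrow> 'a"

definition tmono :: "nat \<Rightarrow> 'a::zero \<Rightarrow> nat \<times> nat \<times> nat \<times> nat \<Rightarrow> 'a tpoly" where
  "tmono q c e = (\<lambda>(a1,a2,b1,b2).
     if (a1,a2,b1,b2) = e \<and> a1 < q \<and> a2 < q \<and> b1 < q \<and> b2 < q then c else 0)"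

definition tone :: "nat \<Rightarrow> 'a::{zero,one} tpoly" where
  "tone q = tmono q 1 (0,0,0,0)"

definition tmul :: "nat \<Rightarrow> 'a::comm_ring_1 tpoly \<Rightarrow> 'a tpoly \<Rightarrow> 'a tpoly" where
  "tmul q f g = (\<lambda>(a1,a2,b1,b2).
     if a1 < q \<and> a2 < q \<and> b1 < q \<and> b2 < q then
       (\<Sum>c1\<le>a1. \<Sum>c2\<le>a2. \<Sum>d1\<le>b1. \<Sum>d2\<le>b2.
          f (c1,c2,d1,d2) * g (a1-c1, a2-c2, b1-d1, b2-d2))
     else 0)"

definition tpow :: "nat \<Rightarrow> 'a::comm_ring_1 tpoly \<Rightarrow> nat \<Rightarrow> 'a tpoly" where
  "tpow q f n = (tmul q f ^^ n) (tone q)"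

definition lam :: "nat \<Rightarrow> nat \<Rightarrow> 'a::comm_ring_1" where
  "lam p i = of_nat ((p choose i) div p)"

definition Fm1 :: "nat \<Rightarrow> nat \<Rightarrow> nat \<Rightarrow> (nat \<Rightarrow> 'a::comm_ring_1) \<Rightarrow> 'a tpoly" where
  "Fm1 p m M alpha = (\<lambda>x. tmono (p^m) 1 (1,0,0,0) x + tmono (p^m) 1 (0,0,1,0) x
      + (\<Sum>n\<le>M. \<Sum>i\<in>{1..p-1}.
           tmono (p^m) (alpha n * lam p i) (0, i * p^n, 0, (p - i) * p^n) x))"

definition Fm2 :: "nat \<Rightarrow> nat \<Rightarrow> 'a::comm_ring_1 tpoly" where
  "Fm2 p m = (\<lambda>x. tmono (p^m) 1 (0,1,0,0) x + tmono (p^m) 1 (0,0,0,1) x)"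

definition Fm_field ::
  "nat \<Rightarrow> nat \<Rightarrow> 'a::field set \<Rightarrow> nat \<Rightarrow> (nat \<Rightarrow> 'a) \<Rightarrow> (nat \<times> nat \<Rightarrow> 'a \<Rightarrow> 'a) \<Rightarrow> bool" where
  "Fm_field p m kk M alpha D \<longleftrightarrow>
     D (0,0) = id
   \<and> (\<forall>i<p^m. \<forall>j<p^m. \<forall>r s. D (i,j) (r + s) = D (i,j) r + D (i,j) s)
   \<and> (\<forall>i<p^m. \<forall>j<p^m. \<forall>r s. D (i,j) (r * s) =
        (\<Sum>a\<le>i. \<Sum>b\<le>j. D (a,b) r * D (i-a, j-b) s))
   \<and> (\<forall>i<p^m. \<forall>j<p^m. D (i,j) 1 = (if (i,j) = (0,0) then 1 else 0))
   \<and> (\<forall>i<p^m. \<forall>j<p^m. \<forall>c\<in>kk. D (i,j) c = (if (i,j) = (0,0) then c else 0))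
   \<and> (\<forall>r i1 i2 j1 j2. i1 < p^m \<longrightarrow> i2 < p^m \<longrightarrow> j1 < p^m \<longrightarrow> j2 < p^m \<longrightarrow>
        D (j1,j2) (D (i1,i2) r) =
        (\<Sum>a1<p^m. \<Sum>a2<p^m. D (a1,a2) r *
           tmul (p^m) (tpow (p^m) (Fm1 p m M alpha) a1) (tpow (p^m) (Fm2 p m) a2) (i1,i2,j1,j2)))"

definition Fs :: "nat \<Rightarrow> (nat \<times> nat \<Rightarrow> 'a::zero \<Rightarrow> 'a) \<Rightarrow> nat \<Rightarrow> 'a set" where
  "Fs p D s = {r. \<forall>j\<le>s. D (p^j, 0) r = 0 \<and> D (0, p^j) r = 0}"

definition perfect_subfield :: "nat \<Rightarrow> 'a::field set \<Rightarrow> bool" where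
  "perfect_subfield p kk \<longleftrightarrow> 0 \<in> kk \<and> 1 \<in> kk
     \<and> (\<forall>x\<in>kk. \<forall>y\<in>kk. x + y \<in> kk \<and> x * y \<in> kk \<and> - x \<in> kk \<and> inverse x \<in> kk)
     \<and> (\<forall>x\<in>kk. \<exists>y\<in>kk. y ^ p = x)"

end

theory Submission
  imports Defs "HOL-Computational_Algebra.Polynomial"
begin

text \<open>Write a nonzero index as \<open>p^s * u\<close> with \<open>p \<nmid> u\<close> and \<open>s \<le> n\<close>, and let \<open>r \<in> F_n\<close>.
  For \<open>D_(a,b)\<close> with \<open>a = p^s * u > 0\<close>, apply \<open>D_(a - p^s, b)\<close> to \<open>D_(p^s,0) r = 0\<close> and read off the
  coefficient of \<open>v1^(p^s) w1^(a - p^s) w2^b\<close> in the iteration law: it contains no \<open>v2\<close>, and after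
  \<open>v2 := 0\<close> the group law is just \<open>(v1 + w1, w2)\<close>, so only \<open>binom(a, p^s) D_(a,b) r\<close> survives.
  Since \<open>(1 + X)^(p^s) = 1 + X^(p^s)\<close> in characteristic \<open>p\<close>, \<open>binom(p^s * u, p^s) \<equiv> u \<noteq> 0\<close>.
  For \<open>D_(0,b)\<close> the same comparison with \<open>D_(0,p^s) r = 0\<close> yields \<open>binom(b, p^s) D_(0,b) r\<close> plus
  terms \<open>D_(a1,a2) r\<close> with \<open>a1 > 0\<close>; as \<open>F[m]\<close> has no constant terms these satisfy
  \<open>a1 + a2 \<le> b\<close>, so they vanish by the first case.\<close>

lemma tmul_tmono_left:
  "tmul q (tmono q c (e1,e2,e3,e4)) g (a1,a2,b1,b2) =
   (if a1 < q \<and> a2 < q \<and> b1 < q \<and> b2 < q \<and> e1 \<le> a1 \<and> e2 \<le> a2 \<and> e3 \<le> b1 \<and> e4 \<le> b2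
    then c * g (a1-e1, a2-e2, b1-e3, b2-e4) else 0)"
proof -
  have summand: "tmono q c (e1,e2,e3,e4) (c1,c2,d1,d2) * g (a1-c1, a2-c2, b1-d1, b2-d2)
     = (if c1 = e1 then if c2 = e2 then if d1 = e3 then if d2 = e4 then
          (if e1 < q \<and> e2 < q \<and> e3 < q \<and> e4 < q then c * g (a1-e1, a2-e2, b1-e3, b2-e4) else 0)
        else 0 else 0 else 0 else 0)" for c1 c2 d1 d2
    by (auto simp: tmono_def)
  have const_if: "(\<Sum>k\<in>S. if P then f k else 0) = (if P then sum f S else 0)"
    for S P and f :: "nat \<Rightarrow> 'a"
    by simp
  show ?thesis
    unfolding tmul_def split_conv summand by (simp only: const_if sum.delta finite_atMost) auto
qed

lemma tmul_commute: "tmul q f g = tmul q g f"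
proof (rule ext, clarify)
  have flip: "(\<Sum>c\<le>a. P c) = (\<Sum>c\<le>a. Q c)" if "\<And>c. c \<le> a \<Longrightarrow> P c = Q (a - c)"
    for a :: nat and P Q :: "nat \<Rightarrow> 'a"
    using that by (intro sum.reindex_bij_witness[of _ "\<lambda>c. a - c" "\<lambda>c. a - c"]) auto
  show "tmul q f g (a1,a2,b1,b2) = tmul q g f (a1,a2,b1,b2)" for a1 a2 b1 b2
    unfolding tmul_def split_conv by (intro if_cong refl, (rule flip)+) (simp add: mult.commute)
qed

lemma tmul_add_left: "tmul q (\<lambda>x. f x + g x) h = (\<lambda>x. tmul q f h x + tmul q g h x)"
  by (auto simp: tmul_def distrib_right sum.distrib fun_eq_iff)

lemma tmul_tone_left:
  "x < q \<Longrightarrow> y < q \<Longrightarrow> z < q \<Longrightarrow> w < q \<Longrightarrow> tmul q (tone q) f (x,y,z,w) = f (x,y,z,w)"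
  by (simp add: tone_def tmul_tmono_left)

lemma tpow_0 [simp]: "tpow q f 0 = tone q"
  by (simp add: tpow_def)

lemma tpow_Suc: "tpow q f (Suc n) = tmul q f (tpow q f n)"
  by (simp add: tpow_def)

lemma tpow_v1_plus_w1:
  "tpow q (\<lambda>x. tmono q (1::'a::comm_ring_1) (1,0,0,0) x + tmono q 1 (0,0,1,0) x) n (a1,a2,b1,b2) =
   (if a2 = 0 \<and> b2 = 0 \<and> a1 + b1 = n \<and> a1 < q \<and> b1 < q then of_nat (n choose a1) else 0)"
proof (induction n arbitrary: a1 a2 b1 b2)
  case 0
  then show ?case by (auto simp: tone_def tmono_def)
next
  case (Suc n)
  then show ?case
    by (simp only: tpow_Suc tmul_add_left tmul_tmono_left) (cases a1; cases b1; auto)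
qed

lemma tpow_v2_plus_w2:
  "tpow q (\<lambda>x. tmono q (1::'a::comm_ring_1) (0,1,0,0) x + tmono q 1 (0,0,0,1) x) n (a1,a2,b1,b2) =
   (if a1 = 0 \<and> b1 = 0 \<and> a2 + b2 = n \<and> a2 < q \<and> b2 < q then of_nat (n choose a2) else 0)"
proof (induction n arbitrary: a1 a2 b1 b2)
  case 0
  then show ?case by (auto simp: tone_def tmono_def)
next
  case (Suc n)
  then show ?case
    by (simp only: tpow_Suc tmul_add_left tmul_tmono_left) (cases a2; cases b2; auto)
qed

lemma tpow_w2: "tpow q (tmono q (1::'a::comm_ring_1) (0,0,0,1)) n = tmono q 1 (0,0,0,n)"
proof (induction n)
  case 0
  then show ?case by (simp add: tone_def)
next
  case (Suc n)
  show ?case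
    by (rule ext, clarify, simp only: tpow_Suc Suc.IH tmul_tmono_left) (auto simp: tmono_def)
qed

definition tsubst_v2_zero :: "'a::zero tpoly \<Rightarrow> 'a tpoly" where
  "tsubst_v2_zero f = (\<lambda>(a1,a2,b1,b2). if a2 = 0 then f (a1,a2,b1,b2) else 0)"

lemma tsubst_v2_zero_tmul:
  "tsubst_v2_zero (tmul q f g) = tmul q (tsubst_v2_zero f) (tsubst_v2_zero g)"
  by (rule ext, clarify) (auto simp: tsubst_v2_zero_def tmul_def intro!: sum.neutral)

lemma tsubst_v2_zero_tpow: "tsubst_v2_zero (tpow q f n) = tpow q (tsubst_v2_zero f) n"
proof (induction n)
  case 0
  show ?case by (rule ext, clarify) (auto simp: tsubst_v2_zero_def tone_def tmono_def)
next
  case (Suc n)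
  then show ?case by (simp add: tpow_Suc tsubst_v2_zero_tmul)
qed

lemma tsubst_v2_zero_Fm1:
  assumes "p > 0"
  shows "tsubst_v2_zero (Fm1 p m M alpha) =
    (\<lambda>x. tmono (p^m) (1::'a::comm_ring_1) (1,0,0,0) x + tmono (p^m) 1 (0,0,1,0) x)"
  using assms
  by (intro ext, clarify) (auto simp: tsubst_v2_zero_def Fm1_def tmono_def intro!: sum.neutral)

lemma tsubst_v2_zero_Fm2: "tsubst_v2_zero (Fm2 p m) = tmono (p^m) (1::'a::comm_ring_1) (0,0,0,1)"
  by (rule ext, clarify) (auto simp: tsubst_v2_zero_def Fm2_def tmono_def)

lemma coeff_Fm_powers_v2_free:
  assumes "p > 0" "c \<le> a" "a < p^m" "b < p^m"
  shows "tmul (p^m) (tpow (p^m) (Fm1 p m M alpha) a1) (tpow (p^m) (Fm2 p m) a2) (c, 0, a - c, b) =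
    (if a1 = a \<and> a2 = b then of_nat (a choose c) else (0::'a::comm_ring_1))"
proof -
  let ?q = "p^m"
  have "tmul ?q (tpow ?q (Fm1 p m M alpha) a1) (tpow ?q (Fm2 p m) a2) (c, 0, a - c, b) =
      tsubst_v2_zero (tmul ?q (tpow ?q (Fm1 p m M alpha) a1) (tpow ?q (Fm2 p m) a2)) (c, 0, a - c, b)"
    by (simp add: tsubst_v2_zero_def)
  also have "\<dots> = tmul ?q (tmono ?q 1 (0,0,0,a2))
      (tpow ?q (\<lambda>x. tmono ?q 1 (1,0,0,0) x + tmono ?q 1 (0,0,1,0) x) a1) (c, 0, a - c, b)"
    using assms(1)
    by (simp only: tsubst_v2_zero_tmul tsubst_v2_zero_tpow tsubst_v2_zero_Fm1 tsubst_v2_zero_Fm2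
        tpow_w2 tmul_commute[of ?q "tpow _ _ a1"])
  also have "\<dots> = (if a1 = a \<and> a2 = b then of_nat (a choose c) else 0)"
    using assms by (simp only: tmul_tmono_left tpow_v1_plus_w1) auto
  finally show ?thesis .
qed

lemma coeff_Fm2_power:
  assumes "c \<le> b" "b < p^m"
  shows "tpow (p^m) (Fm2 p m) a2 (0, c, 0, b - c) =
    (if a2 = b then of_nat (b choose c) else (0::'a::comm_ring_1))"
  using assms unfolding Fm2_def by (simp only: tpow_v2_plus_w2) auto

definition tord_ge :: "nat \<Rightarrow> 'a::zero tpoly \<Rightarrow> bool" where
  "tord_ge d f \<longleftrightarrow> (\<forall>a1 a2 b1 b2. f (a1,a2,b1,b2) \<noteq> 0 \<longrightarrow> d \<le> a1 + a2 + b1 + b2)"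

lemma tord_ge_1I: "f (0,0,0,0) = 0 \<Longrightarrow> tord_ge 1 f"
  unfolding tord_ge_def by (metis One_nat_def Suc_leI add_is_0 gr0I)

lemma tord_ge_tmul:
  assumes "tord_ge d f" "tord_ge e g"
  shows "tord_ge (d + e) (tmul q f g)"
  unfolding tord_ge_def
proof (intro allI impI)
  fix a1 a2 b1 b2
  assume "tmul q f g (a1,a2,b1,b2) \<noteq> 0"
  then obtain c1 c2 d1 d2 where "c1 \<le> a1" "c2 \<le> a2" "d1 \<le> b1" "d2 \<le> b2"
    "f (c1,c2,d1,d2) \<noteq> 0" "g (a1-c1,a2-c2,b1-d1,b2-d2) \<noteq> 0"
    unfolding tmul_def by (auto split: if_splits elim!: sum.not_neutral_contains_not_neutral)
      (metis mult_not_zero)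
  with assms show "d + e \<le> a1 + a2 + b1 + b2"
    unfolding tord_ge_def by fastforce
qed

lemma tord_ge_tpow:
  assumes "tord_ge 1 f"
  shows "tord_ge n (tpow q f n)"
proof (induction n)
  case 0
  show ?case by (simp add: tord_ge_def)
next
  case (Suc n)
  then show ?case using tord_ge_tmul[OF assms Suc] by (simp add: tpow_Suc)
qed

lemma tord_ge_Fm_powers:
  assumes "p > 0"
  shows "tord_ge (k + l)
    (tmul q (tpow q (Fm1 p m M alpha) k) (tpow q (Fm2 p m :: 'a::comm_ring_1 tpoly) l))"
proof -
  have "tord_ge 1 (Fm1 p m M alpha :: 'a tpoly)"
    using assms by (intro tord_ge_1I) (auto simp: Fm1_def tmono_def intro!: sum.neutral)
  moreover have "tord_ge 1 (Fm2 p m :: 'a tpoly)"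
    by (intro tord_ge_1I) (simp add: Fm2_def tmono_def)
  ultimately show ?thesis
    by (intro tord_ge_tmul tord_ge_tpow)
qed

lemma of_nat_choose_prime_power_mult_neq_0:
  assumes "prime CHAR('a::field)" and "\<not> CHAR('a) dvd u"
  shows "(of_nat ((CHAR('a)^s * u) choose CHAR('a)^s) :: 'a) \<noteq> 0"
proof -
  define N where "N = CHAR('a)^s"
  have "N > 0" using assms(1) unfolding N_def by (simp add: prime_gt_0_nat)
  have "coeff ([:1,1:] ^ (N*u)) N = (of_nat ((N*u) choose N) :: 'a)"
  proof (cases "N \<le> N*u")
    case True
    then show ?thesis by (simp add: coeff_linear_poly_power)
  next
    case False
    then show ?thesis
      using \<open>N > 0\<close> by (simp add: coeff_eq_0 degree_linear_power binomial_eq_0)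
  qed
  also have "[:1,1:] ^ (N*u) = (1 + monom (1::'a) N) ^ u"
  proof -
    have "[:1,1:] = 1 + monom (1::'a) 1" by (simp add: monom_altdef one_pCons)
    then have "[:1,1:] ^ N = 1 + monom (1::'a) N"
      using freshmans_dream'[where x=1 and y="monom (1::'a) 1" and n=s] assms(1)
      by (simp add: N_def monom_power)
    then show ?thesis by (simp add: power_mult)
  qed
  also have "(1 + monom (1::'a) N) ^ u = (\<Sum>k\<le>u. monom (of_nat (u choose k)) (N*k))"
    by (subst add.commute, subst binomial_ring) (simp add: monom_power of_nat_monom mult_monom)
  also have "coeff \<dots> N = (\<Sum>k\<le>u. if k = 1 then of_nat (u choose k) else 0)"
    using \<open>N > 0\<close> by (auto simp: coeff_sum coeff_monom intro: sum.cong)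
  also have "\<dots> = of_nat u"
    using assms(2) by (cases u) auto
  finally show ?thesis
    using assms(2) by (metis N_def of_nat_eq_0_iff_char_dvd)
qed

lemma prime_power_factor_below:
  fixes p x n :: nat
  assumes "prime p" "0 < x" "x < p^(n+1)"
  obtains s u where "x = p^s * u" "\<not> p dvd u" "s \<le> n"
proof -
  define k where "k = multiplicity p x"
  have "\<not> is_unit p" using assms(1) not_prime_unit by blast
  then obtain u where u: "x = p^k * u" "\<not> p dvd u"
    using multiplicity_decompose'[of x p] assms(2) unfolding k_def by blast
  then have "p^k < p^(n+1)"
    using assms(2,3) by (metis dvd_imp_le dvd_triv_left le_less_trans)
  then have "k < n + 1" by (rule power_less_imp_less_exp[OF prime_gt_1_nat[OF assms(1)]])
  with u that show ?thesis by simp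
qed

lemma sum_lessThan_delta2:
  fixes q :: nat
  assumes "a < q" "b < q"
  shows "(\<Sum>a1<q. \<Sum>a2<q. if a1 = a \<and> a2 = b then X else 0) = X"
proof -
  have "(\<Sum>a2<q. if a1 = a \<and> a2 = b then X else 0) = (if a1 = a then X else 0)" for a1
    using assms by (cases "a1 = a") auto
  then show ?thesis using assms by simp
qed

context
  fixes p m M :: nat and kk :: "'a::field set" and alpha :: "nat \<Rightarrow> 'a"
    and D :: "nat \<times> nat \<Rightarrow> 'a \<Rightarrow> 'a"
  assumes prime: "prime p" and char: "CHAR('a) = p" and Fm: "Fm_field p m kk M alpha D"
begin

lemma Fm_field_zero:
  assumes "i < p^m" "j < p^m"
  shows "D (i,j) 0 = 0"
proof -
  have "D (i,j) (0 + 0) = D (i,j) 0 + D (i,j) 0"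
    using Fm assms unfolding Fm_field_def by (elim conjE) (simp only:)
  then show ?thesis by (metis add_cancel_right_right)
qed

lemma Fm_field_iterate:
  "i1 < p^m \<Longrightarrow> i2 < p^m \<Longrightarrow> j1 < p^m \<Longrightarrow> j2 < p^m \<Longrightarrow>
   D (j1,j2) (D (i1,i2) r) = (\<Sum>a1<p^m. \<Sum>a2<p^m. D (a1,a2) r *
     tmul (p^m) (tpow (p^m) (Fm1 p m M alpha) a1) (tpow (p^m) (Fm2 p m) a2) (i1,i2,j1,j2))"
  using Fm unfolding Fm_field_def by (elim conjE) (simp only:)

lemma Fs_kernel_pos_first:
  assumes r: "r \<in> Fs p D n" and "n < m" and a: "0 < a" "a < p^(n+1)" and b: "b < p^(n+1)"
  shows "D (a,b) r = 0"
proof -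
  obtain s u where su: "a = p^s * u" "\<not> p dvd u" "s \<le> n"
    using prime_power_factor_below[OF prime a] .
  have "p^(n+1) \<le> p^m"
    using \<open>n < m\<close> prime by (intro power_increasing) (auto simp: Suc_leI prime_gt_0_nat)
  moreover have "p^s \<le> a" using su a(1) by (simp add: Nat.gr0I)
  ultimately have lt: "p^s < p^m" "a - p^s < p^m" "a < p^m" "b < p^m" using a b by auto
  have "0 = D (a - p^s, b) (D (p^s, 0) r)"
    using r su(3) lt by (simp add: Fs_def Fm_field_zero)
  also have "\<dots> = (\<Sum>a1<p^m. \<Sum>a2<p^m.
      if a1 = a \<and> a2 = b then D (a,b) r * of_nat (a choose p^s) else 0)"
    using lt \<open>p^s \<le> a\<close> prime
    by (simp add: Fm_field_iterate coeff_Fm_powers_v2_free prime_gt_0_nat, intro sum.cong) auto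
  also have "\<dots> = D (a,b) r * of_nat (a choose p^s)"
    using lt(3,4) by (rule sum_lessThan_delta2)
  finally show ?thesis
    using of_nat_choose_prime_power_mult_neq_0[where 'a='a and u=u and s=s] prime char su(1,2)
    by simp
qed

lemma Fs_kernel_zero_first:
  assumes r: "r \<in> Fs p D n" and "n < m" and b: "0 < b" "b < p^(n+1)"
  shows "D (0,b) r = 0"
proof -
  obtain s u where su: "b = p^s * u" "\<not> p dvd u" "s \<le> n"
    using prime_power_factor_below[OF prime b] .
  have "p^(n+1) \<le> p^m"
    using \<open>n < m\<close> prime by (intro power_increasing) (auto simp: Suc_leI prime_gt_0_nat)
  moreover have "p^s \<le> b" using su b(1) by (simp add: Nat.gr0I)
  ultimately have lt: "p^s < p^m" "b - p^s < p^m" "b < p^m" using b by auto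
  have summand: "D (a1,a2) r * tmul (p^m) (tpow (p^m) (Fm1 p m M alpha) a1) (tpow (p^m) (Fm2 p m) a2)
      (0, p^s, 0, b - p^s) = (if a1 = 0 \<and> a2 = b then D (0,b) r * of_nat (b choose p^s) else 0)"
    for a1 a2
  proof (cases "a1 = 0")
    case True
    then show ?thesis
      using lt \<open>p^s \<le> b\<close> prime by (simp add: tmul_tone_left coeff_Fm2_power prime_gt_0_nat)
  next
    case False
    have "D (a1,a2) r = 0"
      if "tmul (p^m) (tpow (p^m) (Fm1 p m M alpha) a1) (tpow (p^m) (Fm2 p m) a2)
            (0, p^s, 0, b - p^s) \<noteq> 0"
    proof -
      have "tord_ge (a1 + a2)
          (tmul (p^m) (tpow (p^m) (Fm1 p m M alpha) a1) (tpow (p^m) (Fm2 p m) a2))"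
        using prime by (simp add: tord_ge_Fm_powers prime_gt_0_nat)
      then have "a1 + a2 \<le> 0 + p^s + 0 + (b - p^s)"
        using that unfolding tord_ge_def by blast
      then have "a1 + a2 \<le> b" using \<open>p^s \<le> b\<close> by simp
      then show ?thesis
        using Fs_kernel_pos_first[OF r \<open>n < m\<close>, of a1 a2] False b(2) by simp
    qed
    with False show ?thesis by auto
  qed
  have "0 = D (0, b - p^s) (D (0, p^s) r)"
    using r su(3) lt prime by (simp add: Fs_def Fm_field_zero prime_gt_0_nat)
  also have "\<dots> = (\<Sum>a1<p^m. \<Sum>a2<p^m.
      if a1 = 0 \<and> a2 = b then D (0,b) r * of_nat (b choose p^s) else 0)"
    using lt prime by (simp add: Fm_field_iterate summand prime_gt_0_nat)
  also have "\<dots> = D (0,b) r * of_nat (b choose p^s)"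
    using lt(3) prime by (intro sum_lessThan_delta2) (auto simp: prime_gt_0_nat)
  finally show ?thesis
    using of_nat_choose_prime_power_mult_neq_0[where 'a='a and u=u and s=s] prime char su(1,2)
    by simp
qed

end


theorem lemma4p4:
  fixes p m M n i j :: nat and kk :: "'a::field set" and alpha :: "nat \<Rightarrow> 'a"
    and D :: "nat \<times> nat \<Rightarrow> 'a \<Rightarrow> 'a"
  assumes "prime p" and "CHAR('a) = p"
    and "perfect_subfield p kk"
    and "m > 0"
    and "\<forall>l\<le>M. alpha l \<in> kk"
    and "Fm_field p m kk M alpha D"
    and "n \<le> m - 1"
    and "i < p ^ (n + 1)" and "j < p ^ (n + 1)" and "(i, j) \<noteq> (0, 0)"
  shows "Fs p D n \<subseteq> {r. D (i, j) r = 0}"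
proof
  fix r
  assume r: "r \<in> Fs p D n"
  have "n < m" using assms(4,7) by linarith
  show "r \<in> {r. D (i, j) r = 0}"
  proof (cases "i = 0")
    case True
    then show ?thesis
      using Fs_kernel_zero_first[OF assms(1,2,6) r \<open>n < m\<close>] assms(9,10) by simp
  next
    case False
    then show ?thesis
      using Fs_kernel_pos_first[OF assms(1,2,6) r \<open>n < m\<close>] assms(8,9) by simp
  qed
qed

end
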